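(* For every $0<p_0,q_0<\infty$, \[ \mathcal{A}(p_0,q_0)=\{(p,q):\ 0<p,q<\infty,\ p\ge p_0,\ q\ge q_0,\ q/p\le q_0/p_0\}. \]
   Context: $\lambda_f(\tau)=\mu\{|f|>\tau\}$, $f^*(s)=\inf\{\tau>0:\lambda_f(\tau)\le s\}$; for $a>0$, $\int_0^\infty h\,d(t^a):=a\int_0^\infty h(t)t^{a-1}dt$. For fixed $0<p_0,q_0<\infty$, $\mathcal{A}(p_0,q_0)$ denotes the set of all pairs $(p,q)$ with $0<p,q<\infty$ such that: for arbitrary measurable functions $f,g$ (on $(0,\infty)$ with Lebesgue measure, or any $\sigma$-finite measure space) satisfying (i) there is $\tau_0\in(0,\infty)$ with $\lambda_f(\tau)\le\lambda_g(\tau)$ for $\tau<\tau_0$ and $\lambda_f(\tau)\ge\lambda_g(\tau)$ for $\tau>\tau_0$, (ii) $\int_0^\infty(f^*(t)^{q_0}-g^*(t)^{q_0})\,d(t^{q_0/p_0})\ge0$, and (iii) $(f^*(t)^q-g^*(t)^q)t^{q/p-1}\in L^1(0,\infty)$, it follows that $\int_0^\infty(f^*(t)^q-g^*(t)^q)\,d(t^{q/p})\ge0$. *)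

theory Defs
  imports "HOL-Analysis.Analysis"
begin

text \<open>Underlying measure space: (0,\<infinity>) with Lebesgue measure.
  Functions are real-valued and Lebesgue measurable; only their values on (0,\<infinity>) matter.\<close>

definition dist_fun :: "(real \<Rightarrow> real) \<Rightarrow> real \<Rightarrow> ennreal" where
  "dist_fun f \<tau> = emeasure lebesgue {x \<in> {0<..}. \<bar>f x\<bar> > \<tau>}"

text \<open>Decreasing rearrangement, extended-real valued (Inf of the empty set is \<infinity>).\<close>
definition decr_rearr :: "(real \<Rightarrow> real) \<Rightarrow> real \<Rightarrow> ereal" where
  "decr_rearr f s = Inf {ereal \<tau> | \<tau>. \<tau> > 0 \<and> dist_fun f \<tau> \<le> ennreal s}"

text \<open>Real value of f^*(t) (used only where f^* is known to be finite).\<close>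
definition rstar :: "(real \<Rightarrow> real) \<Rightarrow> real \<Rightarrow> real" where
  "rstar f t = real_of_ereal (decr_rearr f t)"

text \<open>\<integral>_0^\<infinity> h d(t^a) := a \<integral>_0^\<infinity> h(t) t^(a-1) dt, as an integrand on (0,\<infinity>).\<close>
definition dpow_integrand :: "real \<Rightarrow> (real \<Rightarrow> real) \<Rightarrow> real \<Rightarrow> real" where
  "dpow_integrand a h t = a * h t * t powr (a - 1)"

text \<open>"The integral of u over (0,\<infinity>) exists (in the extended sense) and is \<ge> 0":
  the negative part has finite integral, not exceeding the integral of the positive part.\<close>
definition ext_integral_nonneg :: "(real \<Rightarrow> real) \<Rightarrow> bool" where
  "ext_integral_nonneg u \<longleftrightarrow>
     (\<integral>\<^sup>+ t. indicator {0<..} t * ennreal (- u t) \<partial>lborel) < \<infinity> \<and>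
     (\<integral>\<^sup>+ t. indicator {0<..} t * ennreal (- u t) \<partial>lborel)
       \<le> (\<integral>\<^sup>+ t. indicator {0<..} t * ennreal (u t) \<partial>lborel)"

definition cond_i :: "(real \<Rightarrow> real) \<Rightarrow> (real \<Rightarrow> real) \<Rightarrow> bool" where
  "cond_i f g \<longleftrightarrow> (\<exists>\<tau>0>0. (\<forall>\<tau>. 0 < \<tau> \<and> \<tau> < \<tau>0 \<longrightarrow> dist_fun f \<tau> \<le> dist_fun g \<tau>) \<and>
                            (\<forall>\<tau>. \<tau> > \<tau>0 \<longrightarrow> dist_fun f \<tau> \<ge> dist_fun g \<tau>))"

definition diff_pow :: "real \<Rightarrow> (real \<Rightarrow> real) \<Rightarrow> (real \<Rightarrow> real) \<Rightarrow> real \<Rightarrow> real" where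
  "diff_pow r f g t = rstar f t powr r - rstar g t powr r"

text \<open>Membership of (p,q) in the class \<A>(p0,q0). Condition (iii) (membership in L^1(0,\<infinity>))
  includes that f^*, g^* are a.e. finite, so that the integrand is a real-valued function.\<close>
definition classA :: "real \<Rightarrow> real \<Rightarrow> (real \<times> real) set" where
  "classA p0 q0 = {(p, q). 0 < p \<and> 0 < q \<and>
     (\<forall>f g. f \<in> borel_measurable lebesgue \<longrightarrow> g \<in> borel_measurable lebesgue \<longrightarrow>
        cond_i f g \<longrightarrow>
        ext_integral_nonneg (dpow_integrand (q0 / p0) (diff_pow q0 f g)) \<longrightarrow>
        (AE t in lborel. t > 0 \<longrightarrow> decr_rearr f t \<noteq> \<infinity> \<and> decr_rearr g t \<noteq> \<infinity>) \<longrightarrow>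
        set_integrable lborel {0<..} (\<lambda>t. diff_pow q f g t * t powr (q / p - 1)) \<longrightarrow>
        (LINT t:{0<..}|lborel. dpow_integrand (q / p) (diff_pow q f g) t) \<ge> 0)}"

end

theory Submission
  imports Defs
begin

text \<open>
  Condition (i) lets f* - g* change sign only once: where f* > g* we have
  g* \<ge> \<tau>0, where f* < g* we have g* \<le> \<tau>0, and some point ts separates the two regions.
  Convexity of x \<mapsto> x powr (q/q0) gives x^q - y^q \<ge> (q/q0) y^(q-q0) (x^q0 - y^q0), and for
  q \<ge> q0, q/p \<le> q0/p0 the factors y^(q-q0) and t^(q/p - q0/p0) may be replaced by their values
  at \<tau>0 and ts on either side of ts. So the (p,q)-integrand dominates a positive multiple of the
  (p0,q0)-integrand, pointwise.

  Necessity. If q < q0 or q/p > q0/p0, perturbing a trivial pair of two-step functions yields a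
  pair with equal (p0,q0)-integrals and a negative (p,q)-integral.
\<close>

section \<open>Decreasing rearrangements\<close>

lemma decr_rearr_nonneg: "0 \<le> decr_rearr f t"
  unfolding decr_rearr_def by (rule Inf_greatest) auto

lemma decr_rearr_antimono: "s \<le> t \<Longrightarrow> decr_rearr f t \<le> decr_rearr f s"
  unfolding decr_rearr_def
  by (rule Inf_superset_mono) (auto intro: order_trans[OF _ ennreal_leI])

lemma borel_measurable_decr_rearr: "decr_rearr f \<in> borel_measurable borel"
proof (rule borel_measurableI_greater)
  fix y
  have "is_interval {x. y < decr_rearr f x}"
    unfolding is_interval_1 by (auto intro: less_le_trans decr_rearr_antimono)
  then show "{x \<in> space borel. y < decr_rearr f x} \<in> sets borel"
    by (simp add: real_interval_borel_measurable)
qed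

lemma borel_measurable_diff_pow [measurable]: "diff_pow a f g \<in> borel_measurable borel"
  using borel_measurable_decr_rearr unfolding diff_pow_def[abs_def] rstar_def by measurable

lemma dist_fun_antimono:
  assumes "f \<in> borel_measurable lebesgue" "\<sigma> \<le> \<tau>"
  shows "dist_fun f \<tau> \<le> dist_fun f \<sigma>"
proof -
  have "(\<lambda>x. \<bar>f x\<bar>) \<in> borel_measurable lebesgue" using assms(1) by (rule borel_measurable_abs)
  then have "{x \<in> space lebesgue. \<sigma> < \<bar>f x\<bar>} \<in> sets lebesgue"
    unfolding borel_measurable_iff_greater by blast
  moreover have "{0::real<..} \<in> sets lebesgue" by simp
  ultimately have "{0<..} \<inter> {x \<in> space lebesgue. \<sigma> < \<bar>f x\<bar>} \<in> sets lebesgue"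
    by (rule sets.Int[rotated])
  moreover have "{x \<in> {0<..}. \<sigma> < \<bar>f x\<bar>} = {0<..} \<inter> {x \<in> space lebesgue. \<sigma> < \<bar>f x\<bar>}" by auto
  ultimately have "{x \<in> {0<..}. \<sigma> < \<bar>f x\<bar>} \<in> sets lebesgue" by simp
  then show ?thesis
    unfolding dist_fun_def by (rule emeasure_mono[rotated]) (use assms(2) in auto)
qed

lemma ereal_le_decr_rearr:
  assumes "f \<in> borel_measurable lebesgue" "\<not> dist_fun f \<tau> \<le> ennreal t"
  shows "ereal \<tau> \<le> decr_rearr f t"
  unfolding decr_rearr_def
proof (rule Inf_greatest, clarify)
  fix \<sigma> assume "dist_fun f \<sigma> \<le> ennreal t"
  then show "ereal \<tau> \<le> ereal \<sigma>"
    using dist_fun_antimono[OF assms(1), of \<sigma> \<tau>] assms(2) by (force intro: order_trans)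
qed

lemma decr_rearr_le:
  assumes "0 < \<tau>" "dist_fun f \<tau> \<le> ennreal t"
  shows "decr_rearr f t \<le> ereal \<tau>"
  unfolding decr_rearr_def using assms by (intro Inf_lower) auto

lemma dist_fun_le_if_decr_rearr_less:
  assumes "f \<in> borel_measurable lebesgue" "decr_rearr f t < ereal \<tau>"
  shows "dist_fun f \<tau> \<le> ennreal t"
proof -
  obtain \<sigma> where "\<sigma> < \<tau>" "dist_fun f \<sigma> \<le> ennreal t"
    using assms(2) unfolding decr_rearr_def by (auto simp: Inf_less_iff)
  then show ?thesis using dist_fun_antimono[OF assms(1), of \<sigma> \<tau>] by auto
qed

lemma decr_rearr_le_if_dist_fun_le_below:
  assumes "f \<in> borel_measurable lebesgue" "g \<in> borel_measurable lebesgue"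
    and le: "\<And>\<tau>. 0 < \<tau> \<Longrightarrow> \<tau> < \<tau>0 \<Longrightarrow> dist_fun f \<tau> \<le> dist_fun g \<tau>"
    and "decr_rearr g t < ereal \<tau>0"
  shows "decr_rearr f t \<le> decr_rearr g t"
proof (rule dense_ge_bounded[OF assms(4)])
  fix w assume w: "decr_rearr g t < w" "w < ereal \<tau>0"
  moreover have "0 < w" using w(1) decr_rearr_nonneg[of g t] by order
  ultimately obtain \<tau> where \<tau>: "w = ereal \<tau>" "0 < \<tau>" "\<tau> < \<tau>0" by (cases w) auto
  have "dist_fun f \<tau> \<le> ennreal t"
    using le[OF \<tau>(2,3)] dist_fun_le_if_decr_rearr_less[OF assms(2)] w \<tau> by (blast intro: order_trans)
  then show "decr_rearr f t \<le> w" using decr_rearr_le \<tau> by auto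
qed

lemma decr_rearr_ge_if_dist_fun_ge_above:
  assumes "f \<in> borel_measurable lebesgue" "0 < \<tau>0"
    and ge: "\<And>\<tau>. \<tau>0 < \<tau> \<Longrightarrow> dist_fun g \<tau> \<le> dist_fun f \<tau>"
    and "ereal \<tau>0 < decr_rearr g t"
  shows "decr_rearr g t \<le> decr_rearr f t"
proof (rule dense_le_bounded[OF assms(4)])
  fix w assume w: "ereal \<tau>0 < w" "w < decr_rearr g t"
  then obtain \<tau> where \<tau>: "w = ereal \<tau>" "\<tau>0 < \<tau>" by (cases w) auto
  have "\<not> dist_fun g \<tau> \<le> ennreal t"
    using decr_rearr_le[of \<tau> g t] w \<tau> assms(2) by auto
  then have "\<not> dist_fun f \<tau> \<le> ennreal t" using ge[OF \<tau>(2)] by (meson order_trans)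
  then show "w \<le> decr_rearr f t" using ereal_le_decr_rearr[OF assms(1)] \<tau> by auto
qed

lemma cond_i_decr_rearr_crossing:
  assumes "f \<in> borel_measurable lebesgue" "g \<in> borel_measurable lebesgue" "cond_i f g"
  obtains \<tau>0 where "0 < \<tau>0"
    "\<And>t. decr_rearr g t < decr_rearr f t \<Longrightarrow> ereal \<tau>0 \<le> decr_rearr g t"
    "\<And>t. decr_rearr f t < decr_rearr g t \<Longrightarrow> decr_rearr g t \<le> ereal \<tau>0"
proof -
  obtain \<tau>0 where "0 < \<tau>0"
    and "\<And>\<tau>. 0 < \<tau> \<Longrightarrow> \<tau> < \<tau>0 \<Longrightarrow> dist_fun f \<tau> \<le> dist_fun g \<tau>"
    and "\<And>\<tau>. \<tau>0 < \<tau> \<Longrightarrow> dist_fun g \<tau> \<le> dist_fun f \<tau>"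
    using assms(3) unfolding cond_i_def by blast
  then show ?thesis
    using decr_rearr_le_if_dist_fun_le_below[OF assms(1,2), of \<tau>0]
      decr_rearr_ge_if_dist_fun_ge_above[OF assms(1), of \<tau>0 g]
    by (intro that[of \<tau>0]) (meson not_le)+
qed

lemma rstar_eq_decr_rearr: "decr_rearr f t \<noteq> \<infinity> \<Longrightarrow> ereal (rstar f t) = decr_rearr f t"
  unfolding rstar_def using decr_rearr_nonneg[of f t] by (intro ereal_real') auto

lemma rstar_nonneg: "0 \<le> rstar f t"
  unfolding rstar_def by (rule real_of_ereal_pos[OF decr_rearr_nonneg])

lemma cond_i_rstar_crossing:
  assumes "f \<in> borel_measurable lebesgue" "g \<in> borel_measurable lebesgue" "cond_i f g"
  obtains \<tau>0 where "0 < \<tau>0"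
    "\<And>t. decr_rearr f t \<noteq> \<infinity> \<Longrightarrow> decr_rearr g t \<noteq> \<infinity> \<Longrightarrow>
      rstar g t < rstar f t \<Longrightarrow> \<tau>0 \<le> rstar g t"
    "\<And>t. decr_rearr f t \<noteq> \<infinity> \<Longrightarrow> decr_rearr g t \<noteq> \<infinity> \<Longrightarrow>
      rstar f t < rstar g t \<Longrightarrow> rstar g t \<le> \<tau>0"
    "\<And>t t'. decr_rearr f t \<noteq> \<infinity> \<Longrightarrow> decr_rearr g t \<noteq> \<infinity> \<Longrightarrow>
      decr_rearr f t' \<noteq> \<infinity> \<Longrightarrow> decr_rearr g t' \<noteq> \<infinity> \<Longrightarrow>
      rstar g t < rstar f t \<Longrightarrow> rstar f t' < rstar g t' \<Longrightarrow> t < t'"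
proof -
  obtain \<tau>0 where \<tau>0: "0 < \<tau>0"
    "\<And>t. decr_rearr g t < decr_rearr f t \<Longrightarrow> ereal \<tau>0 \<le> decr_rearr g t"
    "\<And>t. decr_rearr f t < decr_rearr g t \<Longrightarrow> decr_rearr g t \<le> ereal \<tau>0"
    using cond_i_decr_rearr_crossing[OF assms] by blast
  have crossing: "t < t'" if "decr_rearr g t < decr_rearr f t" "decr_rearr f t' < decr_rearr g t'" for t t'
  proof (rule ccontr)
    assume "\<not> t < t'"
    then have "decr_rearr f t \<le> decr_rearr f t'" "decr_rearr g t \<le> decr_rearr g t'"
      by (simp_all add: decr_rearr_antimono)
    with \<tau>0(2)[OF that(1)] \<tau>0(3)[OF that(2)] that show False by order
  qed
  show ?thesis
  proof (rule that[OF \<tau>0(1)])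
    fix t assume "decr_rearr f t \<noteq> \<infinity>" "decr_rearr g t \<noteq> \<infinity>"
    then have "decr_rearr f t = ereal (rstar f t)" "decr_rearr g t = ereal (rstar g t)"
      by (simp_all add: rstar_eq_decr_rearr)
    then show "rstar g t < rstar f t \<Longrightarrow> \<tau>0 \<le> rstar g t"
      and "rstar f t < rstar g t \<Longrightarrow> rstar g t \<le> \<tau>0"
      using \<tau>0(2,3)[of t] by simp_all
  next
    fix t t' assume "decr_rearr f t \<noteq> \<infinity>" "decr_rearr g t \<noteq> \<infinity>"
      "decr_rearr f t' \<noteq> \<infinity>" "decr_rearr g t' \<noteq> \<infinity>"
      "rstar g t < rstar f t" "rstar f t' < rstar g t'"
    then show "t < t'"
      by (intro crossing) (simp_all flip: rstar_eq_decr_rearr)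
  qed
qed

section \<open>A convexity estimate for powers\<close>

lemma powr_ge_tangent:
  fixes U V s :: real
  assumes "1 \<le> s" "0 < V" "0 \<le> U"
  shows "V powr s + s * V powr (s - 1) * (U - V) \<le> U powr s"
proof (cases "U = 0")
  case True
  have "V powr s = V powr (s - 1) * V" using assms by (simp add: powr_diff)
  then have "V powr s + s * V powr (s - 1) * (U - V) = (1 - s) * V powr s"
    using True by (simp add: algebra_simps)
  also have "\<dots> \<le> 0" using assms by (simp add: mult_nonpos_nonneg)
  finally show ?thesis using True by simp
next
  case False
  have "s * V powr (s - 1) * (U - V) \<le> U powr s - V powr s"
    using assms False
    by (intro convex_on_imp_above_tangent[where A = "{0<..}"] powr_convex)
       (auto simp: interior_open intro!: derivative_eq_intros)
  then show ?thesis by simp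
qed

lemma powr_mono2_iff: "0 < a \<Longrightarrow> 0 \<le> x \<Longrightarrow> 0 \<le> y \<Longrightarrow> x powr a \<le> y powr a \<longleftrightarrow> x \<le> y"
  for a x y :: real
  by (meson not_le powr_less_mono2 powr_mono2 less_imp_le)

lemma powr_diff_ge_tangent:
  fixes x y q q0 :: real
  assumes "0 \<le> x" "0 < y" "0 < q0" "q0 \<le> q"
  shows "q / q0 * y powr (q - q0) * (x powr q0 - y powr q0) \<le> x powr q - y powr q"
proof -
  have "q0 * (q / q0) = q" "q0 * (q / q0 - 1) = q - q0" using assms(3) by (simp_all add: field_simps)
  then have "(x powr q0) powr (q / q0) = x powr q" "(y powr q0) powr (q / q0) = y powr q"
    and "(y powr q0) powr (q / q0 - 1) = y powr (q - q0)"
    by (simp_all add: powr_powr)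
  moreover have "1 \<le> q / q0" using assms by simp
  ultimately show ?thesis
    using powr_ge_tangent[of "q / q0" "y powr q0" "x powr q0"] assms(2) by simp
qed

lemma weighted_powr_diff_ge:
  fixes x y t ts \<tau>0 q q0 r r0 :: real
  assumes "0 < q0" "q0 \<le> q" "r \<le> r0" "0 < \<tau>0" "0 < t" "0 < ts" "0 \<le> x" "0 \<le> y"
    and above: "y < x \<Longrightarrow> \<tau>0 \<le> y \<and> t \<le> ts"
    and below: "x < y \<Longrightarrow> y \<le> \<tau>0 \<and> ts \<le> t"
  shows "(q / q0 * \<tau>0 powr (q - q0) * ts powr (r - r0)) * ((x powr q0 - y powr q0) * t powr (r0 - 1))
      \<le> (x powr q - y powr q) * t powr (r - 1)"
proof -
  define C D where "C = q / q0 * \<tau>0 powr (q - q0)" and "D = x powr q0 - y powr q0"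
  have "C * D * ts powr (r - r0) \<le> (x powr q - y powr q) * t powr (r - r0)"
  proof -
    consider "y < x" | "x < y" | "x = y" by linarith
    then show ?thesis
    proof cases
      case 1
      with above have "\<tau>0 \<le> y" "t \<le> ts" by auto
      have "0 \<le> D" using 1 assms by (auto simp: D_def intro: powr_mono2)
      have "\<tau>0 powr (q - q0) \<le> y powr (q - q0)" using \<open>\<tau>0 \<le> y\<close> assms by (intro powr_mono2) auto
      then have "C * D \<le> q / q0 * y powr (q - q0) * D"
        using \<open>0 \<le> D\<close> assms unfolding C_def by (intro mult_right_mono mult_left_mono) auto
      also have "\<dots> \<le> x powr q - y powr q"
        using powr_diff_ge_tangent[of x y q0 q] 1 assms by (simp add: D_def)
      finally have "C * D * ts powr (r - r0) \<le> (x powr q - y powr q) * ts powr (r - r0)"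
        by (simp add: mult_right_mono)
      also have "\<dots> \<le> (x powr q - y powr q) * t powr (r - r0)"
      proof (rule mult_left_mono)
        show "ts powr (r - r0) \<le> t powr (r - r0)" using \<open>t \<le> ts\<close> assms by (intro powr_mono2') auto
        show "0 \<le> x powr q - y powr q" using 1 assms by (simp add: powr_mono2)
      qed
      finally show ?thesis .
    next
      case 2
      with below have "y \<le> \<tau>0" "ts \<le> t" by auto
      have "D \<le> 0" using 2 assms by (auto simp: D_def intro: powr_mono2)
      have "0 \<le> C" using assms by (simp add: C_def)
      then have "C * D * ts powr (r - r0) \<le> C * D * t powr (r - r0)"
        using \<open>D \<le> 0\<close> \<open>ts \<le> t\<close> assms
        by (intro mult_left_mono_neg powr_mono2') (auto simp: mult_nonneg_nonpos)
      also have "y powr (q - q0) \<le> \<tau>0 powr (q - q0)" using \<open>y \<le> \<tau>0\<close> assms by (intro powr_mono2) auto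
      then have "C * D \<le> q / q0 * y powr (q - q0) * D"
        using \<open>D \<le> 0\<close> assms unfolding C_def by (intro mult_right_mono_neg mult_left_mono) auto
      also have "\<dots> \<le> x powr q - y powr q"
        using powr_diff_ge_tangent[of x y q0 q] 2 assms by (simp add: D_def)
      finally show ?thesis by (simp add: mult_right_mono)
    qed (simp add: D_def)
  qed
  then have "(C * D * ts powr (r - r0)) * t powr (r0 - 1)
      \<le> (x powr q - y powr q) * t powr (r - r0) * t powr (r0 - 1)"
    by (rule mult_right_mono) simp
  then have "(C * ts powr (r - r0)) * (D * t powr (r0 - 1))
      \<le> (x powr q - y powr q) * t powr (r - r0) * t powr (r0 - 1)"
    by (simp only: ac_simps)
  also have "\<dots> = (x powr q - y powr q) * t powr (r - 1)"
    using \<open>0 < t\<close> by (simp add: powr_add[symmetric] mult.assoc)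
  finally show ?thesis unfolding C_def D_def .
qed

section \<open>Signs of integrals over \<open>(0,\<infinity>)\<close>\<close>

lemma set_integral_eq_nn_integral_diff:
  fixes h :: "real \<Rightarrow> real"
  assumes "set_integrable lborel A h"
  shows "(\<integral>\<^sup>+ x. indicator A x * ennreal (h x) \<partial>lborel) < \<infinity>"
    and "(\<integral>\<^sup>+ x. indicator A x * ennreal (- h x) \<partial>lborel) < \<infinity>"
    and "(LINT x:A|lborel. h x) = enn2real (\<integral>\<^sup>+ x. indicator A x * ennreal (h x) \<partial>lborel)
        - enn2real (\<integral>\<^sup>+ x. indicator A x * ennreal (- h x) \<partial>lborel)"
proof -
  let ?k = "\<lambda>x. indicator A x *\<^sub>R h x"
  have int: "integrable lborel ?k" using assms by (simp add: set_integrable_def)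
  have pos: "(\<lambda>x. ennreal (?k x)) = (\<lambda>x. indicator A x * ennreal (h x))"
    and neg: "(\<lambda>x. ennreal (- ?k x)) = (\<lambda>x. indicator A x * ennreal (- h x))"
    by (auto simp: fun_eq_iff indicator_def)
  have "(\<integral>\<^sup>+ x. ennreal (norm (?k x)) \<partial>lborel) < \<infinity>"
    using int by (simp add: integrable_iff_bounded)
  moreover have "(\<integral>\<^sup>+ x. ennreal (?k x) \<partial>lborel) \<le> (\<integral>\<^sup>+ x. ennreal (norm (?k x)) \<partial>lborel)"
    and "(\<integral>\<^sup>+ x. ennreal (- ?k x) \<partial>lborel) \<le> (\<integral>\<^sup>+ x. ennreal (norm (?k x)) \<partial>lborel)"
    by (auto intro!: nn_integral_mono ennreal_leI)
  ultimately have "(\<integral>\<^sup>+ x. ennreal (?k x) \<partial>lborel) < \<infinity>" "(\<integral>\<^sup>+ x. ennreal (- ?k x) \<partial>lborel) < \<infinity>"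
    by (meson le_less_trans)+
  then show "(\<integral>\<^sup>+ x. indicator A x * ennreal (h x) \<partial>lborel) < \<infinity>"
    "(\<integral>\<^sup>+ x. indicator A x * ennreal (- h x) \<partial>lborel) < \<infinity>"
    unfolding pos neg by auto
  show "(LINT x:A|lborel. h x) = enn2real (\<integral>\<^sup>+ x. indicator A x * ennreal (h x) \<partial>lborel)
        - enn2real (\<integral>\<^sup>+ x. indicator A x * ennreal (- h x) \<partial>lborel)"
    unfolding set_lebesgue_integral_def real_lebesgue_integral_def[OF int] pos[symmetric] neg[symmetric] ..
qed

lemma ext_integral_nonneg_iff_set_integral_nonneg:
  assumes "set_integrable lborel {0<..} u"
  shows "ext_integral_nonneg u \<longleftrightarrow> 0 \<le> (LINT t:{0<..}|lborel. u t)"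
proof -
  have enn2real_le_iff: "enn2real a \<le> enn2real b \<longleftrightarrow> a \<le> b" if "a < \<infinity>" "b < \<infinity>" for a b :: ennreal
    using that by (cases a rule: ennreal_cases; cases b rule: ennreal_cases) auto
  show ?thesis
    using set_integral_eq_nn_integral_diff[OF assms]
    by (simp add: ext_integral_nonneg_def enn2real_le_iff)
qed

lemma ext_integral_nonneg_dominated:
  assumes "0 < c" "u \<in> borel_measurable borel"
    and dom: "AE t in lborel. 0 < t \<longrightarrow> c * u t \<le> h t"
    and "ext_integral_nonneg u"
  shows "ext_integral_nonneg h"
proof -
  let ?pos = "\<lambda>v t. indicator {0<..} t * ennreal (v t)"
  let ?neg = "\<lambda>v t. indicator {0<..} t * ennreal (- v t)"
  have "AE t in lborel. ?neg h t \<le> ennreal c * ?neg u t \<and> ennreal c * ?pos u t \<le> ?pos h t"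
    using dom
  proof eventually_elim
    case (elim t)
    then have "- h t \<le> c * - u t" "c * u t \<le> h t" if "0 < t" using that by auto
    then show ?case
      using \<open>0 < c\<close> by (auto simp: indicator_def ennreal_mult'[symmetric] intro: ennreal_leI)
  qed
  then have "integral\<^sup>N lborel (?neg h) \<le> (\<integral>\<^sup>+ t. ennreal c * ?neg u t \<partial>lborel)"
    and "(\<integral>\<^sup>+ t. ennreal c * ?pos u t \<partial>lborel) \<le> integral\<^sup>N lborel (?pos h)"
    by (auto intro: nn_integral_mono_AE)
  then have neg: "integral\<^sup>N lborel (?neg h) \<le> ennreal c * integral\<^sup>N lborel (?neg u)"
    and pos: "ennreal c * integral\<^sup>N lborel (?pos u) \<le> integral\<^sup>N lborel (?pos h)"
    using assms(2) by (simp_all add: nn_integral_cmult)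
  have "ennreal c * integral\<^sup>N lborel (?neg u) \<le> ennreal c * integral\<^sup>N lborel (?pos u)"
    and "ennreal c * integral\<^sup>N lborel (?neg u) < \<infinity>"
    using assms(4) by (auto simp: ext_integral_nonneg_def mult_left_mono ennreal_mult_less_top)
  with neg pos show ?thesis
    unfolding ext_integral_nonneg_def by (meson order.trans le_less_trans)
qed

lemma AE_zero_if_ext_integral_nonneg_nonpos:
  assumes "u \<in> borel_measurable borel" "ext_integral_nonneg u"
    and "AE t in lborel. 0 < t \<longrightarrow> u t \<le> 0"
  shows "AE t in lborel. 0 < t \<longrightarrow> u t = 0"
proof -
  note [measurable] = assms(1)
  have "AE t in lborel. indicator {0<..} t * ennreal (u t) = 0"
    using assms(3) by eventually_elim (auto simp: indicator_def ennreal_neg)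
  then have "(\<integral>\<^sup>+ t. indicator {0<..} t * ennreal (u t) \<partial>lborel) = 0"
    by (simp add: nn_integral_0_iff_AE)
  then have "(\<integral>\<^sup>+ t. indicator {0<..} t * ennreal (- u t) \<partial>lborel) = 0"
    using assms(2) by (simp add: ext_integral_nonneg_def)
  then have "AE t in lborel. indicator {0<..} t * ennreal (- u t) = 0"
    using assms(1) by (simp add: nn_integral_0_iff_AE)
  then show ?thesis
    using assms(3) by eventually_elim (auto simp: indicator_def)
qed

section \<open>Sufficiency\<close>

lemma exists_separating_point:
  fixes P N :: "real set"
  assumes "P \<noteq> {}" "N \<noteq> {}" "\<And>t t'. t \<in> P \<Longrightarrow> t' \<in> N \<Longrightarrow> t < t'"
  obtains ts where "\<And>t. t \<in> P \<Longrightarrow> t \<le> ts" "\<And>t. t \<in> N \<Longrightarrow> ts \<le> t"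
proof
  have "bdd_above P" using assms by (meson bdd_above.I ex_in_conv less_imp_le)
  then show "t \<le> Sup P" if "t \<in> P" for t using that by (simp add: cSup_upper)
  show "Sup P \<le> t" if "t \<in> N" for t using assms that by (meson cSup_least less_imp_le)
qed

lemma dpow_integrand_diff_pow_ge:
  assumes "0 < q0" "q0 \<le> q" "0 < r" "r \<le> r0" "0 < \<tau>0" "0 < ts" "0 < t"
    and "rstar g t < rstar f t \<Longrightarrow> \<tau>0 \<le> rstar g t \<and> t \<le> ts"
    and "rstar f t < rstar g t \<Longrightarrow> rstar g t \<le> \<tau>0 \<and> ts \<le> t"
  shows "(r / r0 * (q / q0 * \<tau>0 powr (q - q0) * ts powr (r - r0))) * dpow_integrand r0 (diff_pow q0 f g) t
    \<le> dpow_integrand r (diff_pow q f g) t"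
proof -
  let ?K = "q / q0 * \<tau>0 powr (q - q0) * ts powr (r - r0)"
  have "?K * ((rstar f t powr q0 - rstar g t powr q0) * t powr (r0 - 1))
      \<le> (rstar f t powr q - rstar g t powr q) * t powr (r - 1)"
    using assms by (intro weighted_powr_diff_ge) (auto simp: rstar_nonneg)
  then have "r * (?K * ((rstar f t powr q0 - rstar g t powr q0) * t powr (r0 - 1)))
      \<le> r * ((rstar f t powr q - rstar g t powr q) * t powr (r - 1))"
    using \<open>0 < r\<close> by (rule mult_left_mono[OF _ less_imp_le])
  moreover have "(r / r0 * ?K) * dpow_integrand r0 (diff_pow q0 f g) t
      = r * (?K * ((rstar f t powr q0 - rstar g t powr q0) * t powr (r0 - 1)))"
    using assms(3,4) by (simp add: dpow_integrand_def diff_pow_def)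
  ultimately show ?thesis by (simp add: dpow_integrand_def diff_pow_def mult.assoc)
qed

lemma dpow_integrand_diff_pow_sign:
  assumes "0 < a" "0 < q" "0 < t"
  shows "0 \<le> dpow_integrand a (diff_pow q f g) t \<longleftrightarrow> rstar g t \<le> rstar f t"
    and "dpow_integrand a (diff_pow q f g) t \<le> 0 \<longleftrightarrow> rstar f t \<le> rstar g t"
proof -
  have "dpow_integrand a (diff_pow q f g) t = (a * t powr (a - 1)) * (rstar f t powr q - rstar g t powr q)"
    by (simp add: dpow_integrand_def diff_pow_def)
  moreover have "0 < a * t powr (a - 1)" using assms by simp
  ultimately show "0 \<le> dpow_integrand a (diff_pow q f g) t \<longleftrightarrow> rstar g t \<le> rstar f t"
    and "dpow_integrand a (diff_pow q f g) t \<le> 0 \<longleftrightarrow> rstar f t \<le> rstar g t"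
    using assms by (simp_all add: zero_le_mult_iff mult_le_0_iff powr_mono2_iff rstar_nonneg)
qed

lemma ext_integral_nonneg_dpow_integrand_diff_pow_separated:
  assumes "0 < q0" "q0 \<le> q" "0 < r" "r \<le> r0" "0 < \<tau>0" "0 < ts"
    and separated: "AE t in lborel. 0 < t \<longrightarrow>
      (rstar g t < rstar f t \<longrightarrow> \<tau>0 \<le> rstar g t \<and> t \<le> ts) \<and>
      (rstar f t < rstar g t \<longrightarrow> rstar g t \<le> \<tau>0 \<and> ts \<le> t)"
    and ext: "ext_integral_nonneg (dpow_integrand r0 (diff_pow q0 f g))"
  shows "ext_integral_nonneg (dpow_integrand r (diff_pow q f g))"
proof (rule ext_integral_nonneg_dominated[OF _ _ _ ext])
  show "dpow_integrand r0 (diff_pow q0 f g) \<in> borel_measurable borel"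
    unfolding dpow_integrand_def[abs_def] by measurable
  show "0 < r / r0 * (q / q0 * \<tau>0 powr (q - q0) * ts powr (r - r0))" using assms by simp
  show "AE t in lborel. 0 < t \<longrightarrow> r / r0 * (q / q0 * \<tau>0 powr (q - q0) * ts powr (r - r0))
      * dpow_integrand r0 (diff_pow q0 f g) t \<le> dpow_integrand r (diff_pow q f g) t"
    using separated
  proof eventually_elim
    case (elim t)
    then show ?case using assms(1-6) by (intro impI dpow_integrand_diff_pow_ge) auto
  qed
qed

lemma ext_integral_nonneg_if_AE_nonneg:
  assumes "AE t in lborel. 0 < t \<longrightarrow> 0 \<le> h t"
  shows "ext_integral_nonneg h"
  using ext_integral_nonneg_dominated[of 1 "\<lambda>_. 0" h] assms by (simp add: ext_integral_nonneg_def)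

lemma ext_integral_nonneg_dpow_integrand_diff_pow:
  assumes "0 < q0" "q0 \<le> q" "0 < r" "r \<le> r0"
    and f: "f \<in> borel_measurable lebesgue" and g: "g \<in> borel_measurable lebesgue" and "cond_i f g"
    and fin: "AE t in lborel. 0 < t \<longrightarrow> decr_rearr f t \<noteq> \<infinity> \<and> decr_rearr g t \<noteq> \<infinity>"
    and ext: "ext_integral_nonneg (dpow_integrand r0 (diff_pow q0 f g))"
  shows "ext_integral_nonneg (dpow_integrand r (diff_pow q f g))"
proof -
  let ?u = "dpow_integrand r0 (diff_pow q0 f g)" and ?h = "dpow_integrand r (diff_pow q f g)"
  obtain \<tau>0 where "0 < \<tau>0"
    and above: "\<And>t. decr_rearr f t \<noteq> \<infinity> \<Longrightarrow> decr_rearr g t \<noteq> \<infinity> \<Longrightarrow>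
      rstar g t < rstar f t \<Longrightarrow> \<tau>0 \<le> rstar g t"
    and below: "\<And>t. decr_rearr f t \<noteq> \<infinity> \<Longrightarrow> decr_rearr g t \<noteq> \<infinity> \<Longrightarrow>
      rstar f t < rstar g t \<Longrightarrow> rstar g t \<le> \<tau>0"
    and crossing: "\<And>t t'. decr_rearr f t \<noteq> \<infinity> \<Longrightarrow> decr_rearr g t \<noteq> \<infinity> \<Longrightarrow>
      decr_rearr f t' \<noteq> \<infinity> \<Longrightarrow> decr_rearr g t' \<noteq> \<infinity> \<Longrightarrow>
      rstar g t < rstar f t \<Longrightarrow> rstar f t' < rstar g t' \<Longrightarrow> t < t'"
    using cond_i_rstar_crossing[OF f g \<open>cond_i f g\<close>] by blast
  define Fin where "Fin t \<longleftrightarrow> 0 < t \<and> decr_rearr f t \<noteq> \<infinity> \<and> decr_rearr g t \<noteq> \<infinity>" for t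
  have fin': "AE t in lborel. 0 < t \<longrightarrow> Fin t" using fin by (simp add: Fin_def)
  define P N where "P = {t. Fin t \<and> rstar g t < rstar f t}" and "N = {t. Fin t \<and> rstar f t < rstar g t}"
  have sign_u: "0 \<le> ?u t \<longleftrightarrow> rstar g t \<le> rstar f t" "?u t \<le> 0 \<longleftrightarrow> rstar f t \<le> rstar g t"
    and sign_h: "0 \<le> ?h t \<longleftrightarrow> rstar g t \<le> rstar f t" if "0 < t" for t
    using that assms(1-4) by (simp_all add: dpow_integrand_diff_pow_sign)
  consider "N = {}" | "P = {}" | "P \<noteq> {}" "N \<noteq> {}" by blast
  then show ?thesis
  proof cases
    case 1
    have "AE t in lborel. 0 < t \<longrightarrow> 0 \<le> ?h t"
      using fin' by eventually_elim (use 1 sign_h in \<open>auto simp: N_def not_less\<close>)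
    then show ?thesis by (rule ext_integral_nonneg_if_AE_nonneg)
  next
    case 2
    \<comment> \<open>Then (ii) forces the \<open>(p0,q0)\<close>-integrand, hence \<open>f\<^sup>* - g\<^sup>*\<close>, to vanish a.e.\<close>
    have "AE t in lborel. 0 < t \<longrightarrow> ?u t \<le> 0"
      using fin' by eventually_elim (use 2 sign_u in \<open>auto simp: P_def not_less\<close>)
    moreover have "?u \<in> borel_measurable borel" unfolding dpow_integrand_def[abs_def] by measurable
    ultimately have "AE t in lborel. 0 < t \<longrightarrow> ?u t = 0"
      using ext AE_zero_if_ext_integral_nonneg_nonpos by blast
    then have "AE t in lborel. 0 < t \<longrightarrow> 0 \<le> ?h t"
      by eventually_elim (metis order_refl sign_u(1) sign_h)
    then show ?thesis by (rule ext_integral_nonneg_if_AE_nonneg)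
  next
    case 3
    have "t < t'" if "t \<in> P" "t' \<in> N" for t t'
      using that by (auto simp: P_def N_def Fin_def intro!: crossing)
    then obtain ts where ts: "\<And>t. t \<in> P \<Longrightarrow> t \<le> ts" "\<And>t. t \<in> N \<Longrightarrow> ts \<le> t"
      using exists_separating_point[of P N] 3 by blast
    have "0 < ts" using 3 ts(1) by (fastforce simp: P_def Fin_def)
    have "AE t in lborel. 0 < t \<longrightarrow>
        (rstar g t < rstar f t \<longrightarrow> \<tau>0 \<le> rstar g t \<and> t \<le> ts) \<and>
        (rstar f t < rstar g t \<longrightarrow> rstar g t \<le> \<tau>0 \<and> ts \<le> t)"
      using fin' by eventually_elim (auto simp: P_def N_def Fin_def intro: above below ts)
    then show ?thesis
      by (rule ext_integral_nonneg_dpow_integrand_diff_pow_separated[OF assms(1-4) \<open>0 < \<tau>0\<close> \<open>0 < ts\<close> _ ext])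
  qed
qed

lemma classA_memI:
  assumes "0 < p0" "0 < q0" "0 < p" "0 < q" "q0 \<le> q" "q / p \<le> q0 / p0"
  shows "(p, q) \<in> classA p0 q0"
  unfolding classA_def
proof (clarify, intro conjI assms(3,4) allI impI)
  fix f g assume f: "f \<in> borel_measurable lebesgue" and g: "g \<in> borel_measurable lebesgue"
    and "cond_i f g" and ext: "ext_integral_nonneg (dpow_integrand (q0 / p0) (diff_pow q0 f g))"
    and fin: "AE t in lborel. 0 < t \<longrightarrow> decr_rearr f t \<noteq> \<infinity> \<and> decr_rearr g t \<noteq> \<infinity>"
    and int: "set_integrable lborel {0<..} (\<lambda>t. diff_pow q f g t * t powr (q / p - 1))"
  have "dpow_integrand (q / p) (diff_pow q f g) = (\<lambda>t. q / p * (diff_pow q f g t * t powr (q / p - 1)))"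
    by (simp add: fun_eq_iff dpow_integrand_def)
  then have "set_integrable lborel {0<..} (dpow_integrand (q / p) (diff_pow q f g))"
    using int by (simp add: set_integrable_mult_right)
  moreover have "ext_integral_nonneg (dpow_integrand (q / p) (diff_pow q f g))"
    using assms \<open>cond_i f g\<close> by (intro ext_integral_nonneg_dpow_integrand_diff_pow[OF _ _ _ _ f g _ fin ext]) auto
  ultimately show "0 \<le> (LINT t:{0<..}|lborel. dpow_integrand (q / p) (diff_pow q f g) t)"
    by (simp add: ext_integral_nonneg_iff_set_integral_nonneg)
qed

section \<open>Necessity\<close>

definition two_step :: "real \<Rightarrow> real \<Rightarrow> real \<Rightarrow> real \<Rightarrow> real \<Rightarrow> real" where
  "two_step c1 c2 x1 x2 x = (if 0 < x \<and> x < x1 then c1 else if x1 \<le> x \<and> x < x2 then c2 else 0)"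

definition two_step_power_integral :: "real \<Rightarrow> real \<Rightarrow> real \<Rightarrow> real \<Rightarrow> real \<Rightarrow> real \<Rightarrow> real" where
  "two_step_power_integral q a c1 c2 x1 x2 = (c1 powr q - c2 powr q) * x1 powr a + c2 powr q * x2 powr a"

lemma borel_measurable_two_step: "two_step c1 c2 x1 x2 \<in> borel_measurable lebesgue"
proof -
  have "two_step c1 c2 x1 x2 \<in> borel_measurable lborel"
    unfolding two_step_def[abs_def] by measurable
  then show ?thesis by (rule measurable_completion)
qed

lemma dist_fun_two_step:
  assumes "0 < c2" "c2 \<le> c1" "0 < x1" "x1 \<le> x2" "0 \<le> \<tau>"
  shows "dist_fun (two_step c1 c2 x1 x2) \<tau> = (if \<tau> < c2 then x2 else if \<tau> < c1 then x1 else 0)"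
proof -
  have "{x \<in> {0<..}. \<tau> < \<bar>two_step c1 c2 x1 x2 x\<bar>} =
      (if \<tau> < c2 then {0<..<x2} else if \<tau> < c1 then {0<..<x1} else {})"
    using assms by (auto simp: two_step_def split: if_splits)
  then show ?thesis using assms by (simp add: dist_fun_def emeasure_completion)
qed

lemma decr_rearr_eqI:
  assumes "0 \<le> c" "\<And>\<tau>. 0 < \<tau> \<Longrightarrow> dist_fun f \<tau> \<le> ennreal t \<longleftrightarrow> c \<le> \<tau>"
  shows "decr_rearr f t = ereal c"
  unfolding decr_rearr_def
proof (rule antisym)
  show "ereal c \<le> Inf {ereal \<tau> |\<tau>. 0 < \<tau> \<and> dist_fun f \<tau> \<le> ennreal t}"
    using assms(2) by (intro Inf_greatest) auto
  show "Inf {ereal \<tau> |\<tau>. 0 < \<tau> \<and> dist_fun f \<tau> \<le> ennreal t} \<le> ereal c"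
  proof (rule dense_ge)
    fix w assume "ereal c < w"
    then show "Inf {ereal \<tau> |\<tau>. 0 < \<tau> \<and> dist_fun f \<tau> \<le> ennreal t} \<le> w"
      using assms by (cases w) (auto intro!: Inf_lower)
  qed
qed

lemma decr_rearr_two_step:
  assumes "0 < c2" "c2 \<le> c1" "0 < x1" "x1 \<le> x2" "0 < t"
  shows "decr_rearr (two_step c1 c2 x1 x2) t = ereal (if t < x1 then c1 else if t < x2 then c2 else 0)"
  using assms by (intro decr_rearr_eqI) (auto simp: dist_fun_two_step not_less)

lemma rstar_two_step:
  assumes "0 < c2" "c2 \<le> c1" "0 < x1" "x1 \<le> x2" "0 < t"
  shows "rstar (two_step c1 c2 x1 x2) t = (if t < x1 then c1 else if t < x2 then c2 else 0)"
  unfolding rstar_def decr_rearr_two_step[OF assms] by simp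

lemma has_integral_indicator_Ioo_powr:
  fixes a x :: real
  assumes "0 < a" "0 \<le> x"
  shows "((\<lambda>t. indicator {0<..<x} t * t powr (a - 1)) has_integral x powr a / a) UNIV"
proof -
  have "((\<lambda>t. t powr (a - 1)) has_integral (x powr (a - 1 + 1) / (a - 1 + 1))) {0..x}"
    using assms by (intro has_integral_powr_from_0) auto
  then have "((\<lambda>t. t powr (a - 1)) has_integral x powr a / a) (box 0 x)"
    unfolding has_integral_open_interval cbox_interval by simp
  then have "((\<lambda>t. if t \<in> {0<..<x} then t powr (a - 1) else 0) has_integral x powr a / a) UNIV"
    unfolding has_integral_restrict_UNIV box_real .
  moreover have "(\<lambda>t. if t \<in> {0<..<x} then t powr (a - 1) else 0) = (\<lambda>t. indicator {0<..<x} t * t powr (a - 1))"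
    by (auto simp: fun_eq_iff)
  ultimately show ?thesis by simp
qed

lemma integrable_indicator_Ioo_powr:
  fixes a x :: real
  assumes "0 < a" "0 \<le> x"
  shows "integrable lborel (\<lambda>t. indicator {0<..<x} t * t powr (a - 1))"
    and "(\<integral>t. indicator {0<..<x} t * t powr (a - 1) \<partial>lborel) = x powr a / a"
proof -
  note I = has_integral_indicator_Ioo_powr[OF assms]
  have "(\<integral>\<^sup>+t. ennreal (indicator {0<..<x} t * t powr (a - 1)) \<partial>lborel) = ennreal (x powr a / a)"
    by (rule nn_integral_has_integral_lborel[OF _ _ I]) auto
  then show int: "integrable lborel (\<lambda>t. indicator {0<..<x} t * t powr (a - 1))"
    by (intro integrableI_nonneg) auto
  show "(\<integral>t. indicator {0<..<x} t * t powr (a - 1) \<partial>lborel) = x powr a / a"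
    using has_integral_integral_lborel[OF int] I by (rule has_integral_unique)
qed

lemma set_integral_dpow_two_step:
  assumes "0 < c2" "c2 \<le> c1" "0 < x1" "x1 \<le> x2" "0 < a"
  shows "set_integrable lborel {0<..} (dpow_integrand a (\<lambda>t. rstar (two_step c1 c2 x1 x2) t powr q))"
    and "(LINT t:{0<..}|lborel. dpow_integrand a (\<lambda>t. rstar (two_step c1 c2 x1 x2) t powr q) t)
      = two_step_power_integral q a c1 c2 x1 x2"
proof -
  let ?k = "\<lambda>x t. indicator {0<..<x} t * t powr (a - 1)"
  have eq: "(\<lambda>t. indicator {0<..} t *\<^sub>R dpow_integrand a (\<lambda>t. rstar (two_step c1 c2 x1 x2) t powr q) t)
      = (\<lambda>t. (a * (c1 powr q - c2 powr q)) * ?k x1 t + (a * c2 powr q) * ?k x2 t)"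
  proof
    fix t
    show "indicator {0<..} t *\<^sub>R dpow_integrand a (\<lambda>t. rstar (two_step c1 c2 x1 x2) t powr q) t
      = (a * (c1 powr q - c2 powr q)) * ?k x1 t + (a * c2 powr q) * ?k x2 t"
      using assms by (cases "0 < t") (auto simp: rstar_two_step dpow_integrand_def indicator_def algebra_simps)
  qed
  note I1 = integrable_indicator_Ioo_powr[of a x1] and I2 = integrable_indicator_Ioo_powr[of a x2]
  show "set_integrable lborel {0<..} (dpow_integrand a (\<lambda>t. rstar (two_step c1 c2 x1 x2) t powr q))"
    unfolding set_integrable_def eq using I1(1) I2(1) assms by simp
  show "(LINT t:{0<..}|lborel. dpow_integrand a (\<lambda>t. rstar (two_step c1 c2 x1 x2) t powr q) t)
      = two_step_power_integral q a c1 c2 x1 x2"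
  proof -
    have "(LINT t:{0<..}|lborel. dpow_integrand a (\<lambda>t. rstar (two_step c1 c2 x1 x2) t powr q) t)
        = (a * (c1 powr q - c2 powr q)) * (x1 powr a / a) + (a * c2 powr q) * (x2 powr a / a)"
      unfolding set_lebesgue_integral_def eq using I1 I2 assms by simp
    then show ?thesis using assms by (simp add: two_step_power_integral_def)
  qed
qed

lemma set_integral_dpow_diff_pow_two_step:
  assumes "0 < c2" "c2 \<le> c1" "0 < x1" "x1 \<le> x2" "0 < d2" "d2 \<le> d1" "0 < y1" "y1 \<le> y2" "0 < a"
  shows "set_integrable lborel {0<..} (dpow_integrand a (diff_pow q (two_step c1 c2 x1 x2) (two_step d1 d2 y1 y2)))"
    and "(LINT t:{0<..}|lborel. dpow_integrand a (diff_pow q (two_step c1 c2 x1 x2) (two_step d1 d2 y1 y2)) t)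
      = two_step_power_integral q a c1 c2 x1 x2 - two_step_power_integral q a d1 d2 y1 y2"
proof -
  have eq: "dpow_integrand a (diff_pow q (two_step c1 c2 x1 x2) (two_step d1 d2 y1 y2))
    = (\<lambda>t. dpow_integrand a (\<lambda>t. rstar (two_step c1 c2 x1 x2) t powr q) t
         - dpow_integrand a (\<lambda>t. rstar (two_step d1 d2 y1 y2) t powr q) t)"
    by (simp add: fun_eq_iff dpow_integrand_def diff_pow_def algebra_simps)
  note F = set_integral_dpow_two_step[of c2 c1 x1 x2 a q] and G = set_integral_dpow_two_step[of d2 d1 y1 y2 a q]
  show "set_integrable lborel {0<..} (dpow_integrand a (diff_pow q (two_step c1 c2 x1 x2) (two_step d1 d2 y1 y2)))"
    unfolding eq using F(1) G(1) assms by (intro set_integral_diff) auto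
  show "(LINT t:{0<..}|lborel. dpow_integrand a (diff_pow q (two_step c1 c2 x1 x2) (two_step d1 d2 y1 y2)) t)
      = two_step_power_integral q a c1 c2 x1 x2 - two_step_power_integral q a d1 d2 y1 y2"
    unfolding eq using F G assms by (subst set_integral_diff) auto
qed

lemma two_step_power_integral_le_if_classA:
  assumes mem: "(p, q) \<in> classA p0 q0" and "0 < p0" "0 < q0"
    and f: "0 < c2" "c2 \<le> c1" "0 < x1" "x1 \<le> x2" and g: "0 < d2" "d2 \<le> d1" "0 < y1" "y1 \<le> y2"
    and cond: "cond_i (two_step c1 c2 x1 x2) (two_step d1 d2 y1 y2)"
    and le: "two_step_power_integral q0 (q0 / p0) d1 d2 y1 y2 \<le> two_step_power_integral q0 (q0 / p0) c1 c2 x1 x2"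
  shows "two_step_power_integral q (q / p) d1 d2 y1 y2 \<le> two_step_power_integral q (q / p) c1 c2 x1 x2"
proof -
  let ?f = "two_step c1 c2 x1 x2" and ?g = "two_step d1 d2 y1 y2"
  have "0 < p" "0 < q" using mem by (auto simp: classA_def)
  note I = set_integral_dpow_diff_pow_two_step[OF f g]
  have "ext_integral_nonneg (dpow_integrand (q0 / p0) (diff_pow q0 ?f ?g))"
    using I[of "q0 / p0" q0] le assms(2,3) by (simp add: ext_integral_nonneg_iff_set_integral_nonneg)
  moreover have "AE t in lborel. 0 < t \<longrightarrow> decr_rearr ?f t \<noteq> \<infinity> \<and> decr_rearr ?g t \<noteq> \<infinity>"
    using f g by (simp add: decr_rearr_two_step)
  moreover have "(\<lambda>t. diff_pow q ?f ?g t * t powr (q / p - 1))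
      = (\<lambda>t. (p / q) * dpow_integrand (q / p) (diff_pow q ?f ?g) t)"
    using \<open>0 < p\<close> \<open>0 < q\<close> by (simp add: fun_eq_iff dpow_integrand_def)
  then have "set_integrable lborel {0<..} (\<lambda>t. diff_pow q ?f ?g t * t powr (q / p - 1))"
    using I(1)[of "q / p" q] \<open>0 < p\<close> \<open>0 < q\<close> by (simp add: set_integrable_mult_right)
  ultimately have "0 \<le> (LINT t:{0<..}|lborel. dpow_integrand (q / p) (diff_pow q ?f ?g) t)"
    using mem cond borel_measurable_two_step unfolding classA_def by blast
  then show ?thesis using I(2)[of "q / p" q] \<open>0 < p\<close> \<open>0 < q\<close> by simp
qed

lemma ex_powr_gap_left_of_one:
  fixes s \<alpha> :: real
  assumes "0 < s" "s < 1" "0 < \<alpha>"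
  obtains u where "0 < u" "u < 1" "1 + (2 powr s - 1) * (1 - u powr \<alpha>) < (2 - u) powr \<alpha>"
proof -
  define \<phi> where "\<phi> u = (2 - u) powr \<alpha> - 1 - (2 powr s - 1) * (1 - u powr \<alpha>)" for u :: real
  have "(\<phi> has_real_derivative
      (\<alpha> * (2 - 1) powr (\<alpha> - 1) * (0 - 1) - (2 powr s - 1) * (0 - \<alpha> * 1 powr (\<alpha> - 1)))) (at 1)"
    unfolding \<phi>_def[abs_def] by (auto intro!: derivative_eq_intros)
  then have D: "(\<phi> has_real_derivative (\<alpha> * (2 powr s - 2))) (at 1)" by (simp add: algebra_simps)
  have "2 powr s < 2 powr 1" using assms by (intro powr_less_mono) auto
  then have "\<alpha> * (2 powr s - 2) < 0" using assms by (simp add: mult_pos_neg)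
  then obtain d where d: "0 < d" "\<And>h. 0 < h \<Longrightarrow> h < d \<Longrightarrow> \<phi> 1 < \<phi> (1 - h)"
    using DERIV_neg_dec_left[OF D] by blast
  define h where "h = min (d / 2) (1 / 2)"
  have "0 < h" "h < d" "h < 1" using d by (auto simp: h_def)
  moreover have "\<phi> 1 = 0" by (simp add: \<phi>_def)
  ultimately show ?thesis using d(2)[of h] by (intro that[of "1 - h"]) (auto simp: \<phi>_def)
qed

lemma ex_powr_gap_right_of_zero:
  fixes s w w0 :: real
  assumes "0 < s" "w0 < w" "0 < w0"
  obtains k where "0 < k" "k < w0" "(1 + k) powr s - 1 < w * (1 - (1 - k / w0) powr s)"
proof -
  define \<psi> where "\<psi> k = w * (1 - (1 - k / w0) powr s) - ((1 + k) powr s - 1)" for k :: real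
  have "(\<psi> has_real_derivative
      (w * (0 - s * (1 - 0 / w0) powr (s - 1) * (0 - 1 / w0)) - (s * (1 + 0) powr (s - 1) * (0 + 1) - 0))) (at 0)"
    unfolding \<psi>_def[abs_def] using assms by (auto intro!: derivative_eq_intros)
  then have D: "(\<psi> has_real_derivative (s * (w / w0 - 1))) (at 0)" by (simp add: algebra_simps)
  have "0 < s * (w / w0 - 1)" using assms by simp
  then obtain d where d: "0 < d" "\<And>h. 0 < h \<Longrightarrow> h < d \<Longrightarrow> \<psi> 0 < \<psi> (0 + h)"
    using DERIV_pos_inc_right[OF D] by blast
  define h where "h = min (d / 2) (w0 / 2)"
  have "0 < h" "h < d" "h < w0" using d assms by (auto simp: h_def)
  moreover have "\<psi> 0 = 0" by (simp add: \<psi>_def)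
  ultimately show ?thesis using d(2)[of h] by (intro that[of h]) (auto simp: \<psi>_def)
qed

lemma classA_imp_q0_le:
  assumes "(p, q) \<in> classA p0 q0" "0 < p0" "0 < q0"
  shows "q0 \<le> q"
proof (rule ccontr)
  assume "\<not> q0 \<le> q"
  have "0 < p" "0 < q" using assms(1) by (auto simp: classA_def)
  define r r0 s \<alpha> where "r = q / p" and "r0 = q0 / p0" and "s = q / q0" and "\<alpha> = r / r0"
  have "0 < r" "0 < r0" "0 < s" "s < 1" "0 < \<alpha>"
    using assms \<open>0 < p\<close> \<open>0 < q\<close> \<open>\<not> q0 \<le> q\<close> by (auto simp: r_def r0_def s_def \<alpha>_def)
  then obtain u where u: "0 < u" "u < 1" "1 + (2 powr s - 1) * (1 - u powr \<alpha>) < (2 - u) powr \<alpha>"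
    using ex_powr_gap_left_of_one by blast
  \<comment> \<open>Test \<open>a\<cdot>1\<^bsub>(0,1)\<^esub>\<close> against \<open>a\<cdot>1\<^bsub>(0,S)\<^esub> + 1\<^bsub>[S,T)\<^esub>\<close>; both \<open>(p0,q0)\<close>-integrals equal 2.\<close>
  define a S T where "a = (2::real) powr (1 / q0)" and "S = u powr (1 / r0)" and "T = (2 - u) powr (1 / r0)"
  have "1 \<le> a" "0 < S" "S < 1" "1 < T"
    using assms(3) u \<open>0 < r0\<close> powr_less_mono2[of "1 / r0" u 1]
    by (auto simp: a_def S_def T_def intro: ge_one_powr_ge_zero gr_one_powr)
  have powers: "a powr q0 = 2" "a powr q = 2 powr s" "S powr r0 = u" "T powr r0 = 2 - u"
      "S powr r = u powr \<alpha>" "T powr r = (2 - u) powr \<alpha>"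
    using assms(3) \<open>0 < r0\<close> u by (simp_all add: a_def s_def S_def T_def \<alpha>_def powr_powr)
  have "cond_i (two_step a a 1 1) (two_step a 1 S T)"
    unfolding cond_i_def
    using \<open>1 \<le> a\<close> \<open>0 < S\<close> \<open>S < 1\<close> \<open>1 < T\<close> by (intro exI[of _ 1]) (auto simp: dist_fun_two_step)
  then have "two_step_power_integral q r a 1 S T \<le> two_step_power_integral q r a a 1 1"
    unfolding r_def using \<open>1 \<le> a\<close> \<open>0 < S\<close> \<open>S < 1\<close> \<open>1 < T\<close> powers
    by (intro two_step_power_integral_le_if_classA[OF assms]) (auto simp: two_step_power_integral_def r0_def)
  then show False using u(3) powers by (simp add: two_step_power_integral_def algebra_simps)
qed

lemma classA_imp_ratio_le:
  assumes "(p, q) \<in> classA p0 q0" "0 < p0" "0 < q0"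
  shows "q / p \<le> q0 / p0"
proof (rule ccontr)
  assume "\<not> q / p \<le> q0 / p0"
  have "0 < p" "0 < q" using assms(1) by (auto simp: classA_def)
  define r r0 s where "r = q / p" and "r0 = q0 / p0" and "s = q / q0"
  have "0 < r0" "r0 < r" "0 < s"
    using assms \<open>0 < p\<close> \<open>0 < q\<close> \<open>\<not> q / p \<le> q0 / p0\<close> by (auto simp: r_def r0_def s_def)
  define w w0 where "w = 2 powr r - 1" and "w0 = 2 powr r0 - 1"
  have "0 < w0" "w0 < w" using \<open>0 < r0\<close> \<open>r0 < r\<close> by (simp_all add: w_def w0_def)
  then obtain k where k: "0 < k" "k < w0" "(1 + k) powr s - 1 < w * (1 - (1 - k / w0) powr s)"
    using ex_powr_gap_right_of_zero[OF \<open>0 < s\<close>] by blast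
  \<comment> \<open>Test \<open>a\<cdot>1\<^bsub>(0,1)\<^esub> + b\<cdot>1\<^bsub>[1,2)\<^esub>\<close> against \<open>1\<^bsub>(0,2)\<^esub>\<close>; the \<open>(p0,q0)\<close>-integrals agree.\<close>
  define a b where "a = (1 + k) powr (1 / q0)" and "b = (1 - k / w0) powr (1 / q0)"
  have "0 < 1 - k / w0" using k \<open>0 < w0\<close> by simp
  have "0 \<le> k / w0" using k \<open>0 < w0\<close> by simp
  then have "1 - k / w0 \<le> 1 + k" using k by linarith
  then have "0 < b" "b \<le> a"
    using \<open>0 < 1 - k / w0\<close> assms(3) by (auto simp: a_def b_def intro!: powr_mono2)
  have powers: "a powr q0 = 1 + k" "b powr q0 = 1 - k / w0" "a powr q = (1 + k) powr s"
      "b powr q = (1 - k / w0) powr s"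
    using assms(3) k \<open>0 < 1 - k / w0\<close> by (simp_all add: a_def b_def s_def powr_powr)
  have "cond_i (two_step a b 1 2) (two_step 1 1 2 2)"
    unfolding cond_i_def
    using \<open>0 < b\<close> \<open>b \<le> a\<close> by (intro exI[of _ 1]) (auto simp: dist_fun_two_step)
  moreover have "two_step_power_integral q0 r0 1 1 2 2 \<le> two_step_power_integral q0 r0 a b 1 2"
    using \<open>0 < w0\<close> by (simp add: two_step_power_integral_def powers w0_def field_simps)
  ultimately have "two_step_power_integral q r 1 1 2 2 \<le> two_step_power_integral q r a b 1 2"
    unfolding r_def r0_def using \<open>0 < b\<close> \<open>b \<le> a\<close> by (intro two_step_power_integral_le_if_classA[OF assms]) auto
  then show False using k(3) powers by (simp add: two_step_power_integral_def w_def algebra_simps)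
qed

theorem mainTheorem8:
  fixes p0 q0 :: real
  assumes "0 < p0" and "0 < q0"
  shows "classA p0 q0 = {(p, q). 0 < p \<and> 0 < q \<and> p \<ge> p0 \<and> q \<ge> q0 \<and> q / p \<le> q0 / p0}"
proof -
  have "(p, q) \<in> classA p0 q0 \<longleftrightarrow> 0 < p \<and> 0 < q \<and> p0 \<le> p \<and> q0 \<le> q \<and> q / p \<le> q0 / p0" for p q
  proof
    assume mem: "(p, q) \<in> classA p0 q0"
    then have "0 < p" "0 < q" by (simp_all add: classA_def)
    moreover have "q0 \<le> q" "q / p \<le> q0 / p0"
      using classA_imp_q0_le[OF mem assms] classA_imp_ratio_le[OF mem assms] .
    moreover have "q0 / p \<le> q0 / p0"
      using \<open>q0 \<le> q\<close> \<open>q / p \<le> q0 / p0\<close> \<open>0 < p\<close> by (meson divide_right_mono less_imp_le order_trans)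
    then have "p0 \<le> p" using assms \<open>0 < p\<close> by (simp add: frac_le_eq field_simps)
    ultimately show "0 < p \<and> 0 < q \<and> p0 \<le> p \<and> q0 \<le> q \<and> q / p \<le> q0 / p0" by simp
  qed (use assms classA_memI in blast)
  then show ?thesis by auto
qed

end
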